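(* For every integer $n \ge 3$, \[ \mathcal{F}_{T_n} \le \mathcal{F}_{R_n} \le \binom{n}{2}\, \mathcal{F}_{P_n}. \]
   Context: All graphs are finite and simple. For a graph $G$, a fort is a nonempty set $F \subseteq V(G)$ such that every vertex outside $F$ is adjacent to either zero or at least two vertices of $F$. A fort is minimal if no proper subset of it is a fort. $\mathcal{F}_G$ denotes the number of minimal forts of $G$. $\mathcal{F}_{T_n}$ is the maximum of $\mathcal{F}_T$ over all trees $T$ on $n$ vertices, $\mathcal{F}_{R_n}$ is the maximum of $\mathcal{F}_R$ over all forests $R$ on $n$ vertices, and $\mathcal{F}_{P_n}$ is the number of minimal forts of the path $P_n$ on $n$ vertices (equivalently, $\mathcal{F}_{P_n}=a_n$ where $a_1=a_2=a_3=1$ and $a_n=a_{n-2}+a_{n-3}$ for $n\ge4$). *)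

theory Defs
  imports Main
begin

definition simple_graph :: "nat \<Rightarrow> nat set set \<Rightarrow> bool" where
  "simple_graph n E \<longleftrightarrow> (\<forall>e\<in>E. \<exists>u v. u \<noteq> v \<and> u < n \<and> v < n \<and> e = {u, v})"

definition adj :: "nat set set \<Rightarrow> nat \<Rightarrow> nat \<Rightarrow> bool" where
  "adj E u v \<longleftrightarrow> {u, v} \<in> E \<and> u \<noteq> v"

definition is_fort :: "nat \<Rightarrow> nat set set \<Rightarrow> nat set \<Rightarrow> bool" where
  "is_fort n E F \<longleftrightarrow> F \<noteq> {} \<and> F \<subseteq> {0..<n} \<and>
     (\<forall>v\<in>{0..<n} - F. card {u\<in>F. adj E u v} \<noteq> 1)"

definition is_minimal_fort :: "nat \<Rightarrow> nat set set \<Rightarrow> nat set \<Rightarrow> bool" where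
  "is_minimal_fort n E F \<longleftrightarrow> is_fort n E F \<and> (\<forall>F'. F' \<subset> F \<longrightarrow> \<not> is_fort n E F')"

definition num_min_forts :: "nat \<Rightarrow> nat set set \<Rightarrow> nat" where
  "num_min_forts n E = card {F. is_minimal_fort n E F}"

definition has_cycle :: "nat \<Rightarrow> nat set set \<Rightarrow> bool" where
  "has_cycle n E \<longleftrightarrow> (\<exists>vs. length vs \<ge> 3 \<and> distinct vs \<and> set vs \<subseteq> {0..<n} \<and>
      (\<forall>i. Suc i < length vs \<longrightarrow> adj E (vs ! i) (vs ! Suc i)) \<and>
      adj E (last vs) (hd vs))"

definition connected_graph :: "nat \<Rightarrow> nat set set \<Rightarrow> bool" where
  "connected_graph n E \<longleftrightarrow>
     (\<forall>u<n. \<forall>v<n. (u, v) \<in> {(a, b). adj E a b}\<^sup>*)"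

definition is_forest :: "nat \<Rightarrow> nat set set \<Rightarrow> bool" where
  "is_forest n E \<longleftrightarrow> simple_graph n E \<and> \<not> has_cycle n E"

definition is_tree :: "nat \<Rightarrow> nat set set \<Rightarrow> bool" where
  "is_tree n E \<longleftrightarrow> is_forest n E \<and> connected_graph n E"

definition path_edges :: "nat \<Rightarrow> nat set set" where
  "path_edges n = {{i, Suc i} | i. Suc i < n}"

definition F_T :: "nat \<Rightarrow> nat" where
  "F_T n = Max {num_min_forts n E | E. is_tree n E}"

definition F_R :: "nat \<Rightarrow> nat" where
  "F_R n = Max {num_min_forts n E | E. is_forest n E}"

definition F_P :: "nat \<Rightarrow> nat" where
  "F_P n = num_min_forts n (path_edges n)"

end

theory Submission
  imports Defs
begin

(*
  Every finite forest has an isolated vertex, an isolated edge, a pendant path (a leaf l whose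
  neighbour p has exactly one other neighbour q) or a pendant star (a vertex p with k >= 2 leaves
  and at most one other neighbour).  Deleting the configuration, a minimal fort is either a new
  one (the vertex, the edge, or one of the k choose 2 pairs of star leaves) or, after dropping at
  most one star leaf, a minimal fort of the smaller forest; at a pendant path it becomes a
  minimal fort of the forest without {l, p} or without {l, p, q}, depending on whether it
  contains p.  Induction on n gives 2 F_G <= n (n - 1) a_n for every forest G on n >= 3
  vertices, the recurrence a_n = a_(n-2) + a_(n-3) matching the pendant path.  On the path P_n
  itself the pendant-path correspondence is onto, so a_n <= F_P n.
*)

section \<open>Padovan numbers\<close>

fun padovan :: "nat \<Rightarrow> nat" where
  "padovan 0 = 0"
| "padovan (Suc 0) = 1"
| "padovan (Suc (Suc 0)) = 1"
| "padovan (Suc (Suc (Suc n))) = padovan (Suc n) + padovan n"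

lemma padovan_rec: "3 \<le> n \<Longrightarrow> padovan n = padovan (n - 2) + padovan (n - 3)"
  by (cases n rule: padovan.cases) auto

lemma padovan_le_Suc: "padovan n \<le> padovan (Suc n)"
proof (induction n rule: padovan.induct)
  case (4 n)
  then show ?case by simp
qed simp_all

lemma padovan_mono: "m \<le> n \<Longrightarrow> padovan m \<le> padovan n"
  by (rule lift_Suc_mono_le[of padovan]) (simp_all add: padovan_le_Suc)

lemma padovan_pos: "1 \<le> n \<Longrightarrow> 1 \<le> padovan n"
  using padovan_mono[of 1 n] by simp

lemma padovan_Suc_eq: "4 \<le> n \<Longrightarrow> padovan (Suc n) = padovan n + padovan (n - 4)"
proof -
  assume "4 \<le> n"
  then obtain j where "n = j + 4" using le_Suc_ex by (metis add.commute)
  then show ?thesis by (simp add: numeral_eq_Suc)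
qed

lemma padovan_growth:
  assumes "5 \<le> m"
  shows "k * padovan m \<le> padovan (m + k + 1)"
proof (induction k)
  case (Suc k)
  consider "k = 0" | "k = 1" | "k = 2" | "3 \<le> k" by linarith
  then show ?case
  proof cases
    case 1
    then show ?thesis using padovan_mono[of m "m + 2"] by simp
  next
    case 2
    then show ?thesis using padovan_rec[of "m + 3"] padovan_mono[of m "m + 1"] by simp
  next
    case 3
    obtain j where "m = j + 5" using assms le_Suc_ex by (metis add.commute)
    then show ?thesis using 3 padovan_le_Suc[of j] by (simp add: numeral_eq_Suc)
  next
    case 4
    have "padovan (m + Suc k + 1) = padovan (m + k + 1) + padovan (m + k - 3)"
      using padovan_Suc_eq[of "m + k + 1"] assms by simp
    moreover have "padovan m \<le> padovan (m + k - 3)" using 4 by (intro padovan_mono) simp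
    ultimately show ?thesis using Suc.IH by simp
  qed
qed simp

lemma padovan_numerals [simp]:
  "padovan 3 = 1" "padovan 4 = 2" "padovan 5 = 2" "padovan 6 = 3" "padovan 7 = 4"
  by (simp_all add: numeral_eq_Suc)

text \<open>Twice the bound of the theorem (for \<open>n \<ge> 3\<close>), to stay in \<open>nat\<close>; graphs with fewer than
  three vertices need the separate bound \<open>2 * n\<close>.\<close>
definition fort_bound :: "nat \<Rightarrow> nat" where
  "fort_bound n = (if n < 3 then 2 * n else n * (n - 1) * padovan n)"

lemma add_mult_le_mult_mono:
  fixes A B c x y :: nat
  assumes "A + c \<le> B" "x \<le> y" "1 \<le> x"
  shows "A * x + c \<le> B * y"
proof -
  have "A * x + c \<le> (A + c) * x" using assms(3) by (simp add: algebra_simps)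
  also have "\<dots> \<le> B * y" using assms(1,2) by (rule mult_le_mono)
  finally show ?thesis .
qed

lemma fort_bound_isolated_vertex: "1 \<le> n \<Longrightarrow> 2 + fort_bound (n - 1) \<le> fort_bound n"
proof -
  assume "1 \<le> n"
  then consider "n < 4" | j where "n = j + 4" by (metis add.commute le_Suc_ex not_le)
  then show ?thesis
  proof cases
    case 1
    with \<open>1 \<le> n\<close> consider "n = 1" | "n = 2" | "n = 3" by linarith
    then show ?thesis by cases (simp_all add: fort_bound_def)
  next
    case (2 j)
    have "(j + 3) * (j + 2) * padovan (n - 1) + 2 \<le> (j + 4) * (j + 3) * padovan n"
      by (rule add_mult_le_mult_mono)
        (use padovan_mono[of "n - 1" n] padovan_pos[of "n - 1"] 2 in \<open>auto simp: algebra_simps\<close>)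
    then show ?thesis using 2 by (simp add: fort_bound_def algebra_simps)
  qed
qed

lemma fort_bound_isolated_edge: "2 \<le> n \<Longrightarrow> 2 + fort_bound (n - 2) \<le> fort_bound n"
proof -
  assume "2 \<le> n"
  then consider "n < 5" | j where "n = j + 5" by (metis add.commute le_Suc_ex not_le)
  then show ?thesis
  proof cases
    case 1
    with \<open>2 \<le> n\<close> consider "n = 2" | "n = 3" | "n = 4" by linarith
    then show ?thesis by cases (simp_all add: fort_bound_def)
  next
    case (2 j)
    have "(j + 3) * (j + 2) * padovan (n - 2) + 2 \<le> (j + 5) * (j + 4) * padovan n"
      by (rule add_mult_le_mult_mono)
        (use padovan_mono[of "n - 2" n] padovan_pos[of "n - 2"] 2 in \<open>auto simp: algebra_simps\<close>)
    then show ?thesis using 2 by (simp add: fort_bound_def algebra_simps)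
  qed
qed

lemma fort_bound_pendant_path: "3 \<le> n \<Longrightarrow> fort_bound (n - 2) + fort_bound (n - 3) \<le> fort_bound n"
proof -
  assume "3 \<le> n"
  then consider "n < 6" | j where "n = j + 6" by (metis add.commute le_Suc_ex not_le)
  then show ?thesis
  proof cases
    case 1
    with \<open>3 \<le> n\<close> consider "n = 3" | "n = 4" | "n = 5" by linarith
    then show ?thesis by cases (simp_all add: fort_bound_def)
  next
    case (2 j)
    have "(j + 4) * (j + 3) * padovan (n - 2) \<le> (j + 6) * (j + 5) * padovan (n - 2)"
      and "(j + 3) * (j + 2) * padovan (n - 3) \<le> (j + 6) * (j + 5) * padovan (n - 3)"
      by (intro mult_le_mono1; simp add: algebra_simps)+
    then have "(j + 4) * (j + 3) * padovan (n - 2) + (j + 3) * (j + 2) * padovan (n - 3)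
        \<le> (j + 6) * (j + 5) * padovan n"
      using padovan_rec[of n] 2 by (simp add: algebra_simps)
    then show ?thesis using 2 by (simp add: fort_bound_def algebra_simps)
  qed
qed

lemma fort_bound_pendant_star:
  assumes "2 \<le> k" "k + 1 \<le> n"
  shows "k * (k - 1) + k * fort_bound (n - k - 1) \<le> fort_bound n"
proof -
  define m where "m = n - k - 1"
  have n: "n = m + k + 1" and "\<not> n < 3" using assms m_def by auto
  obtain i where k: "k = i + 2" using assms(1) le_Suc_ex by (metis add.commute)
  have pad_n: "1 \<le> padovan n" using padovan_pos n by simp
  consider "m \<le> 3" | "m = 4" | "5 \<le> m" by linarith
  then show ?thesis
  proof cases
    case 1
    then have "fort_bound m \<le> 2 * m + 2" by (auto simp: fort_bound_def)
    then have "k * (k - 1) + k * fort_bound m \<le> k * (k - 1) + k * (2 * m + 2)"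
      by (intro add_le_mono order_refl mult_le_mono2)
    also have "\<dots> \<le> n * (n - 1)" using n k by (simp add: algebra_simps)
    also have "\<dots> \<le> n * (n - 1) * padovan n" using pad_n by simp
    finally show ?thesis using \<open>\<not> n < 3\<close> m_def by (simp add: fort_bound_def)
  next
    case 2
    have "fort_bound m = 24" using 2 by (simp add: fort_bound_def)
    have "k * (k - 1) + k * 24 \<le> n * (n - 1) * 4" using n k 2 by (simp add: algebra_simps)
    also have "\<dots> \<le> n * (n - 1) * padovan n"
      using padovan_mono[of 7 n] n k 2 by (intro mult_le_mono2) simp
    finally show ?thesis using \<open>fort_bound m = 24\<close> \<open>\<not> n < 3\<close> m_def by (simp add: fort_bound_def)
  next
    case 3
    have "k * fort_bound m = m * (m - 1) * (k * padovan m)" using 3 by (simp add: fort_bound_def)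
    also have "\<dots> \<le> m * (m - 1) * padovan n"
      using padovan_growth[OF 3, of k] n by (intro mult_le_mono2) simp
    finally have "k * fort_bound m \<le> m * (m - 1) * padovan n" .
    moreover have "m * (m - 1) * padovan n + k * (k - 1) \<le> n * (n - 1) * padovan n"
      by (rule add_mult_le_mult_mono) (use n k 3 pad_n in \<open>auto simp: algebra_simps\<close>)
    ultimately show ?thesis using \<open>\<not> n < 3\<close> m_def by (simp add: fort_bound_def)
  qed
qed

lemma two_mult_choose_two: "2 * (n choose 2) = n * (n - 1)"
proof -
  have "even (n * (n - 1))" by (cases n) auto
  then show ?thesis by (simp add: choose_two)
qed

section \<open>Forts on a vertex set\<close>

definition nbrs :: "nat set set \<Rightarrow> nat \<Rightarrow> nat set" where
  "nbrs E v = {u. adj E u v}"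

text \<open>Forts of the graph induced on \<open>V\<close>.\<close>
definition fort_on :: "nat set \<Rightarrow> nat set set \<Rightarrow> nat set \<Rightarrow> bool" where
  "fort_on V E F \<longleftrightarrow> F \<noteq> {} \<and> F \<subseteq> V \<and> (\<forall>v\<in>V - F. card (F \<inter> nbrs E v) \<noteq> 1)"

definition min_fort_on :: "nat set \<Rightarrow> nat set set \<Rightarrow> nat set \<Rightarrow> bool" where
  "min_fort_on V E F \<longleftrightarrow> fort_on V E F \<and> (\<forall>G. G \<subset> F \<longrightarrow> \<not> fort_on V E G)"

definition num_min_forts_on :: "nat set \<Rightarrow> nat set set \<Rightarrow> nat" where
  "num_min_forts_on V E = card {F. min_fort_on V E F}"

lemma num_min_forts_eq_on: "num_min_forts n E = num_min_forts_on {0..<n} E"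
proof -
  have "{u \<in> F. adj E u v} = F \<inter> nbrs E v" for F v
    by (auto simp: nbrs_def)
  then have "is_fort n E F = fort_on {0..<n} E F" for F
    by (simp add: is_fort_def fort_on_def)
  then show ?thesis
    by (simp add: num_min_forts_def num_min_forts_on_def is_minimal_fort_def min_fort_on_def)
qed

lemma adj_commute: "adj E u v \<longleftrightarrow> adj E v u"
  by (auto simp: adj_def insert_commute)

lemma mem_nbrs_iff: "u \<in> nbrs E v \<longleftrightarrow> adj E u v"
  by (simp add: nbrs_def)

lemma not_mem_nbrs_self [simp]: "v \<notin> nbrs E v"
  by (simp add: nbrs_def adj_def)

lemma nbrs_commute: "u \<in> nbrs E v \<longleftrightarrow> v \<in> nbrs E u"
  by (simp add: nbrs_def adj_commute)

lemma fort_onI: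
  assumes "F \<noteq> {}" "F \<subseteq> V" "\<And>v. v \<in> V \<Longrightarrow> v \<notin> F \<Longrightarrow> card (F \<inter> nbrs E v) \<noteq> 1"
  shows "fort_on V E F"
  using assms by (auto simp: fort_on_def)

lemma fort_onD:
  assumes "fort_on V E F"
  shows "F \<noteq> {}" "F \<subseteq> V" "\<And>v. v \<in> V \<Longrightarrow> v \<notin> F \<Longrightarrow> card (F \<inter> nbrs E v) \<noteq> 1"
  using assms by (auto simp: fort_on_def)

lemma fort_on_not_single_nbr:
  assumes "fort_on V E F" "v \<in> V" "v \<notin> F"
  shows "F \<inter> nbrs E v \<noteq> {u}"
  using fort_onD(3)[OF assms] by auto

lemma min_fort_onD:
  assumes "min_fort_on V E F"
  shows "fort_on V E F" "\<And>G. G \<subset> F \<Longrightarrow> \<not> fort_on V E G"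
  using assms by (auto simp: min_fort_on_def)

lemma min_fort_on_subset_eq:
  "min_fort_on V E F \<Longrightarrow> fort_on V E G \<Longrightarrow> G \<subseteq> F \<Longrightarrow> G = F"
  by (auto simp: min_fort_on_def)

lemma finite_min_forts_on: "finite V \<Longrightarrow> finite {F. min_fort_on V E F}"
  by (rule finite_subset[of _ "Pow V"]) (auto simp: min_fort_on_def fort_on_def)

lemma num_min_forts_on_split:
  assumes "finite V"
  shows "card {G. min_fort_on V E G \<and> P G} + card {G. min_fort_on V E G \<and> \<not> P G}
    = num_min_forts_on V E"
proof -
  have "finite {G. min_fort_on V E G \<and> P G}" "finite {G. min_fort_on V E G \<and> \<not> P G}"
    using finite_min_forts_on[OF assms, of E] by (auto intro: finite_subset)
  then have "card {G. min_fort_on V E G \<and> P G} + card {G. min_fort_on V E G \<and> \<not> P G}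
      = card ({G. min_fort_on V E G \<and> P G} \<union> {G. min_fort_on V E G \<and> \<not> P G})"
    by (rule card_Un_disjoint[symmetric]) blast
  also have "{G. min_fort_on V E G \<and> P G} \<union> {G. min_fort_on V E G \<and> \<not> P G} = {G. min_fort_on V E G}"
    by blast
  finally show ?thesis by (simp add: num_min_forts_on_def)
qed

lemma fort_on_contains_min_fort:
  assumes "finite V" "fort_on V E F"
  obtains G where "G \<subseteq> F" "min_fort_on V E G"
proof -
  let ?S = "{G. G \<subseteq> F \<and> fort_on V E G}"
  have "finite ?S"
    by (rule finite_subset[of _ "Pow V"]) (use assms in \<open>auto simp: fort_on_def\<close>)
  moreover have "F \<in> ?S" using assms(2) by simp
  ultimately obtain G where G: "G \<in> ?S" and least: "\<forall>H \<in> ?S. H \<subseteq> G \<longrightarrow> G = H"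
    by (meson finite_has_minimal2)
  have "min_fort_on V E G"
    unfolding min_fort_on_def using G least by blast
  with G show thesis using that by blast
qed

lemma min_fort_onI:
  assumes "finite V" "fort_on V E F" "\<And>H. min_fort_on V E H \<Longrightarrow> H \<subseteq> F \<Longrightarrow> H = F"
  shows "min_fort_on V E F"
  unfolding min_fort_on_def
proof (intro conjI allI impI notI)
  fix G assume "G \<subset> F" "fort_on V E G"
  then obtain H where "H \<subseteq> G" "min_fort_on V E H"
    using fort_on_contains_min_fort assms(1) by blast
  with \<open>G \<subset> F\<close> assms(3) show False by blast
qed (fact assms(2))

lemma num_min_forts_on_pos:
  assumes "finite V" "V \<noteq> {}"
  shows "1 \<le> num_min_forts_on V E"
proof -
  have "fort_on V E V" using assms(2) by (simp add: fort_on_def)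
  then obtain G where "min_fort_on V E G" using fort_on_contains_min_fort assms(1) by blast
  then have "{F. min_fort_on V E F} \<noteq> {}" by blast
  then show ?thesis
    using finite_min_forts_on[OF assms(1)]
    unfolding num_min_forts_on_def by (simp add: Suc_le_eq card_gt_0_iff)
qed

lemma fort_on_leaf:
  assumes "fort_on V E F" "l \<in> V" "V \<inter> nbrs E l = {p}" "p \<in> F"
  shows "l \<in> F"
proof (rule ccontr)
  assume "l \<notin> F"
  moreover have "F \<inter> nbrs E l = {p}" using assms fort_onD(2)[OF assms(1)] by auto
  ultimately show False using fort_on_not_single_nbr assms(1,2) by blast
qed

lemma fort_on_extend:
  assumes G: "fort_on V' E G" and "V' \<subseteq> V" "S \<subseteq> V - V'"
    and sep: "\<And>s w. s \<in> S \<Longrightarrow> w \<in> V' \<Longrightarrow> \<not> adj E s w"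
    and new: "\<And>w. w \<in> V - V' - S \<Longrightarrow> card ((G \<union> S) \<inter> nbrs E w) \<noteq> 1"
  shows "fort_on V E (G \<union> S)"
proof (rule fort_onI)
  fix w assume w: "w \<in> V" "w \<notin> G \<union> S"
  show "card ((G \<union> S) \<inter> nbrs E w) \<noteq> 1"
  proof (cases "w \<in> V'")
    case True
    then have "(G \<union> S) \<inter> nbrs E w = G \<inter> nbrs E w" using sep by (auto simp: mem_nbrs_iff)
    then show ?thesis using fort_onD(3)[OF G True] w by simp
  next
    case False
    then show ?thesis using new w by blast
  qed
qed (use fort_onD[OF G] assms(2,3) in auto)

lemma fort_on_restrict:
  assumes "fort_on V E F" "V' \<subseteq> V" "F \<subseteq> V'"
  shows "fort_on V' E F"
  using assms by (auto simp: fort_on_def)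

lemma min_fort_on_restrict:
  assumes F: "min_fort_on V E F" and "V' \<subseteq> V" and ne: "F \<inter> V' \<noteq> {}"
    and sep: "\<And>s w. s \<in> F - V' \<Longrightarrow> w \<in> V' \<Longrightarrow> \<not> adj E s w"
    and lift: "\<And>G. fort_on V' E G \<Longrightarrow> G \<subset> F \<inter> V' \<Longrightarrow> fort_on V E G \<or> fort_on V E (G \<union> (F - V'))"
  shows "min_fort_on V' E (F \<inter> V')"
  unfolding min_fort_on_def
proof (intro conjI allI impI notI)
  show "fort_on V' E (F \<inter> V')"
  proof (rule fort_onI)
    fix w assume w: "w \<in> V'" "w \<notin> F \<inter> V'"
    then have "F \<inter> V' \<inter> nbrs E w = F \<inter> nbrs E w" using sep by (fastforce simp: mem_nbrs_iff)
    then show "card (F \<inter> V' \<inter> nbrs E w) \<noteq> 1"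
      using fort_onD(3)[OF min_fort_onD(1)[OF F]] w \<open>V' \<subseteq> V\<close> by auto
  qed (use ne in auto)
next
  fix G assume G: "G \<subset> F \<inter> V'" "fort_on V' E G"
  then have "G \<subset> F" "G \<union> (F - V') \<subset> F" by auto
  with lift[OF G(2,1)] show False using min_fort_onD(2)[OF F] by blast
qed

lemma min_forts_on_remove_closed:
  assumes "C \<subseteq> V" "C \<noteq> {}"
    and closed: "\<And>c w. c \<in> C \<Longrightarrow> w \<in> V - C \<Longrightarrow> \<not> adj E c w"
    and covered: "\<And>F. fort_on V E F \<Longrightarrow> F \<inter> C \<noteq> {} \<Longrightarrow> C \<subseteq> F"
  shows "{F. min_fort_on V E F} \<subseteq> insert C {F. min_fort_on (V - C) E F}"
proof (intro subsetI CollectI)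
  have no_nbrs: "G \<inter> nbrs E w = {}" if "G \<subseteq> V - C" "w \<in> C" for G w
    using closed that adj_commute unfolding nbrs_def by blast
  fix F assume F: "F \<in> {F. min_fort_on V E F}"
  then have fort: "fort_on V E F" by (simp add: min_fort_on_def)
  show "F \<in> insert C {F. min_fort_on (V - C) E F}"
  proof (cases "F \<inter> C = {}")
    case True
    then have "F \<inter> (V - C) = F" using fort_onD(2)[OF fort] by blast
    moreover have "min_fort_on (V - C) E (F \<inter> (V - C))"
    proof (rule min_fort_on_restrict)
      fix G assume G: "fort_on (V - C) E G"
      then have "fort_on V E (G \<union> {})"
        by (rule fort_on_extend) (use no_nbrs[OF fort_onD(2)[OF G]] in auto)
      then show "fort_on V E G \<or> fort_on V E (G \<union> (F - (V - C)))" by simp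
    qed (use F True fort_onD[OF fort] in auto)
    ultimately show ?thesis by simp
  next
    case False
    have "fort_on V E C"
    proof (rule fort_onI)
      fix v assume "v \<in> V" "v \<notin> C"
      then have "C \<inter> nbrs E v = {}" using closed by (auto simp: mem_nbrs_iff)
      then show "card (C \<inter> nbrs E v) \<noteq> 1" by simp
    qed (use assms(1,2) in auto)
    then have "C = F" using covered[OF fort False] F min_fort_on_subset_eq by blast
    then show ?thesis by simp
  qed
qed

lemma num_min_forts_on_remove_closed_le:
  assumes "finite V" "C \<subseteq> V" "C \<noteq> {}"
    and "\<And>c w. c \<in> C \<Longrightarrow> w \<in> V - C \<Longrightarrow> \<not> adj E c w"
    and "\<And>F. fort_on V E F \<Longrightarrow> F \<inter> C \<noteq> {} \<Longrightarrow> C \<subseteq> F"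
  shows "num_min_forts_on V E \<le> 1 + num_min_forts_on (V - C) E"
proof -
  have "num_min_forts_on V E \<le> card (insert C {F. min_fort_on (V - C) E F})"
    unfolding num_min_forts_on_def
    by (rule card_mono[OF _ min_forts_on_remove_closed[OF assms(2-5)]])
      (simp add: finite_min_forts_on assms(1))
  also have "\<dots> \<le> 1 + num_min_forts_on (V - C) E"
    by (simp add: num_min_forts_on_def card_insert_if finite_min_forts_on assms(1))
  finally show ?thesis .
qed

lemma num_min_forts_on_isolated_vertex_le:
  assumes "finite V" "v \<in> V" "V \<inter> nbrs E v = {}"
  shows "num_min_forts_on V E \<le> 1 + num_min_forts_on (V - {v}) E"
  by (rule num_min_forts_on_remove_closed_le) (use assms in \<open>auto simp: mem_nbrs_iff adj_commute\<close>)

lemma num_min_forts_on_isolated_edge_le: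
  assumes "finite V" "u \<in> V" "v \<in> V" "V \<inter> nbrs E u = {v}" "V \<inter> nbrs E v = {u}"
  shows "num_min_forts_on V E \<le> 1 + num_min_forts_on (V - {u, v}) E"
proof (rule num_min_forts_on_remove_closed_le)
  fix F assume "fort_on V E F" "F \<inter> {u, v} \<noteq> {}"
  then show "{u, v} \<subseteq> F" using fort_on_leaf assms(2-5) by blast
qed (use assms in \<open>auto simp: mem_nbrs_iff adj_commute\<close>)

lemma num_min_forts_on_bound_isolated_vertex:
  assumes "finite V" "v \<in> V" "V \<inter> nbrs E v = {}"
    and IH: "2 * num_min_forts_on (V - {v}) E \<le> fort_bound (card (V - {v}))"
  shows "2 * num_min_forts_on V E \<le> fort_bound (card V)"
proof -
  have "1 \<le> card V" using assms(1,2) by (simp add: Suc_le_eq card_gt_0_iff) blast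
  have "2 * num_min_forts_on V E \<le> 2 + 2 * num_min_forts_on (V - {v}) E"
    using num_min_forts_on_isolated_vertex_le[OF assms(1-3)] by linarith
  also have "\<dots> \<le> 2 + fort_bound (card V - 1)" using IH assms(2) by simp
  also have "\<dots> \<le> fort_bound (card V)" using fort_bound_isolated_vertex[OF \<open>1 \<le> card V\<close>] .
  finally show ?thesis .
qed

lemma num_min_forts_on_bound_isolated_edge:
  assumes "finite V" "u \<in> V" "v \<in> V" "V \<inter> nbrs E u = {v}" "V \<inter> nbrs E v = {u}"
    and IH: "2 * num_min_forts_on (V - {u, v}) E \<le> fort_bound (card (V - {u, v}))"
  shows "2 * num_min_forts_on V E \<le> fort_bound (card V)"
proof -
  have "u \<noteq> v" using assms(4) by auto
  then have "2 \<le> card V" "card (V - {u, v}) = card V - 2"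
    using card_mono[OF assms(1), of "{u, v}"] assms(2,3) by (simp_all add: card_Diff_subset)
  have "2 * num_min_forts_on V E \<le> 2 + 2 * num_min_forts_on (V - {u, v}) E"
    using num_min_forts_on_isolated_edge_le[OF assms(1-5)] by linarith
  also have "\<dots> \<le> 2 + fort_bound (card V - 2)" using IH \<open>card (V - {u, v}) = card V - 2\<close> by simp
  also have "\<dots> \<le> fort_bound (card V)" using fort_bound_isolated_edge[OF \<open>2 \<le> card V\<close>] .
  finally show ?thesis .
qed

section \<open>Pendant paths\<close>

lemma inj_on_Un_disjoint: "inj_on (\<lambda>G. G \<union> S) {G. G \<inter> S = {}}"
  by (rule inj_onI) blast

locale pendant_path =
  fixes V :: "nat set" and E :: "nat set set" and l p q :: nat
  assumes l_in: "l \<in> V" and nbrs_l: "V \<inter> nbrs E l = {p}" and nbrs_p: "V \<inter> nbrs E p = {l, q}"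
    and l_ne_q: "l \<noteq> q"
begin

lemma p_in: "p \<in> V" and q_in: "q \<in> V" and p_ne_l: "p \<noteq> l" and q_ne_p: "q \<noteq> p"
proof -
  have "p \<in> V \<inter> nbrs E l" "q \<in> V \<inter> nbrs E p" using nbrs_l nbrs_p by auto
  then show "p \<in> V" "q \<in> V" "p \<noteq> l" "q \<noteq> p" by auto
qed

lemma inter_nbrs_l: "X \<subseteq> V \<Longrightarrow> X \<inter> nbrs E l = X \<inter> {p}"
  using nbrs_l by blast

lemma inter_nbrs_p: "X \<subseteq> V \<Longrightarrow> X \<inter> nbrs E p = X \<inter> {l, q}"
  using nbrs_p by blast

lemma not_adj_l: "w \<in> V \<Longrightarrow> w \<noteq> p \<Longrightarrow> \<not> adj E l w"
proof -
  assume "w \<in> V" "w \<noteq> p"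
  then have "w \<notin> nbrs E l" using nbrs_l by blast
  then show ?thesis by (simp add: mem_nbrs_iff adj_commute)
qed

lemma not_adj_p: "w \<in> V \<Longrightarrow> w \<noteq> l \<Longrightarrow> w \<noteq> q \<Longrightarrow> \<not> adj E p w"
proof -
  assume "w \<in> V" "w \<noteq> l" "w \<noteq> q"
  then have "w \<notin> nbrs E p" using nbrs_p by blast
  then show ?thesis by (simp add: mem_nbrs_iff adj_commute)
qed

lemma fort_lift_avoiding_q:
  assumes G: "fort_on (V - {l, p}) E G" and "q \<notin> G"
  shows "fort_on V E G"
proof -
  have GV: "G \<subseteq> V" and "l \<notin> G" "p \<notin> G" using fort_onD(2)[OF G] by auto
  have "fort_on V E (G \<union> {})"
  proof (rule fort_on_extend[OF G])
    fix w assume "w \<in> V - (V - {l, p}) - {}"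
    then have "w = l \<or> w = p" by blast
    then have "G \<inter> nbrs E w = {}"
      using inter_nbrs_l[OF GV] inter_nbrs_p[OF GV] \<open>l \<notin> G\<close> \<open>p \<notin> G\<close> \<open>q \<notin> G\<close> by auto
    then show "card ((G \<union> {}) \<inter> nbrs E w) \<noteq> 1" by simp
  qed auto
  then show ?thesis by simp
qed

lemma fort_lift_insert_l:
  assumes G: "fort_on (V - {l, p}) E G" and "q \<in> G"
  shows "fort_on V E (insert l G)"
proof -
  have GV: "G \<subseteq> V - {l, p}" using fort_onD(2)[OF G] .
  have "fort_on V E (G \<union> {l})"
  proof (rule fort_on_extend[OF G])
    fix w assume "w \<in> V - (V - {l, p}) - {l}"
    then have "(G \<union> {l}) \<inter> nbrs E w = {l, q}"
      using inter_nbrs_p[of "G \<union> {l}"] GV \<open>q \<in> G\<close> l_in by auto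
    then show "card ((G \<union> {l}) \<inter> nbrs E w) \<noteq> 1" using l_ne_q by simp
  qed (use l_in not_adj_l in auto)
  then show ?thesis by simp
qed

lemma fort_lift_q_not_single:
  assumes G: "fort_on (V - {l, p, q}) E G" and "card (G \<inter> nbrs E q) \<noteq> 1"
  shows "fort_on V E G"
proof -
  have "G \<subseteq> V" "l \<notin> G" "p \<notin> G" "q \<notin> G" using fort_onD(2)[OF G] by auto
  then have "G \<inter> nbrs E l = {}" "G \<inter> nbrs E p = {}" using inter_nbrs_l inter_nbrs_p by auto
  then have "fort_on V E (G \<union> {})"
    by (intro fort_on_extend[OF G]) (use assms(2) in auto)
  then show ?thesis by simp
qed

lemma q_nbrs: "p \<in> nbrs E q" "l \<notin> nbrs E q"
proof -
  have "q \<in> nbrs E p" "q \<notin> nbrs E l" using nbrs_l nbrs_p q_in q_ne_p by auto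
  then show "p \<in> nbrs E q" "l \<notin> nbrs E q" by (simp_all add: nbrs_commute[where v = q])
qed

lemma fort_lift_add_lp:
  assumes G: "fort_on (V - {l, p, q}) E G" and q: "card (G \<inter> nbrs E q) = 1"
  shows "fort_on V E (G \<union> {l, p})"
proof (rule fort_on_extend[OF G])
  have GV: "G \<subseteq> V - {l, p, q}" using fort_onD(2)[OF G] .
  have "finite (G \<inter> nbrs E q)" using q by (simp add: card_ge_0_finite)
  fix w assume "w \<in> V - (V - {l, p, q}) - {l, p}"
  then have "(G \<union> {l, p}) \<inter> nbrs E w = insert p (G \<inter> nbrs E q)" "p \<notin> G"
    using q_nbrs GV by auto
  then show "card ((G \<union> {l, p}) \<inter> nbrs E w) \<noteq> 1"
    using q \<open>finite (G \<inter> nbrs E q)\<close> by simp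
qed (use l_in p_in not_adj_l not_adj_p in auto)

lemma min_fort_outside:
  assumes F: "min_fort_on V E F" and "l \<notin> F"
  shows "q \<notin> F" "min_fort_on (V - {l, p}) E F"
proof -
  have fort: "fort_on V E F" using F by (rule min_fort_onD(1))
  then have FV: "F \<subseteq> V" by (rule fort_onD(2))
  have "p \<notin> F" using fort_on_leaf[OF fort l_in nbrs_l] \<open>l \<notin> F\<close> by blast
  show "q \<notin> F"
  proof
    assume "q \<in> F"
    then have "F \<inter> nbrs E p = {q}" using inter_nbrs_p[OF FV] \<open>l \<notin> F\<close> by auto
    then show False using fort_on_not_single_nbr[OF fort p_in \<open>p \<notin> F\<close>] by blast
  qed
  have same: "F \<inter> (V - {l, p}) = F" using FV \<open>p \<notin> F\<close> \<open>l \<notin> F\<close> by blast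
  have "min_fort_on (V - {l, p}) E (F \<inter> (V - {l, p}))"
  proof (rule min_fort_on_restrict[OF F])
    fix G assume "fort_on (V - {l, p}) E G" "G \<subset> F \<inter> (V - {l, p})"
    then show "fort_on V E G \<or> fort_on V E (G \<union> (F - (V - {l, p})))"
      using fort_lift_avoiding_q \<open>q \<notin> F\<close> by blast
  qed (use same fort_onD(1)[OF fort] in auto)
  then show "min_fort_on (V - {l, p}) E F" using same by simp
qed

lemma min_fort_leaf:
  assumes F: "min_fort_on V E F" and "l \<in> F" "p \<notin> F"
  shows "q \<in> F" "min_fort_on (V - {l, p}) E (F - {l})"
proof -
  have fort: "fort_on V E F" using F by (rule min_fort_onD(1))
  then have FV: "F \<subseteq> V" by (rule fort_onD(2))
  show "q \<in> F"
  proof (rule ccontr)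
    assume "q \<notin> F"
    then have "F \<inter> nbrs E p = {l}" using inter_nbrs_p[OF FV] \<open>l \<in> F\<close> by auto
    then show False using fort_on_not_single_nbr[OF fort p_in \<open>p \<notin> F\<close>] by blast
  qed
  have split: "F \<inter> (V - {l, p}) = F - {l}" "F - (V - {l, p}) = {l}"
    using FV \<open>l \<in> F\<close> \<open>p \<notin> F\<close> by auto
  have "min_fort_on (V - {l, p}) E (F \<inter> (V - {l, p}))"
  proof (rule min_fort_on_restrict[OF F])
    fix G assume "fort_on (V - {l, p}) E G"
    then show "fort_on V E G \<or> fort_on V E (G \<union> (F - (V - {l, p})))"
      using fort_lift_avoiding_q fort_lift_insert_l split(2) by (cases "q \<in> G") auto
  qed (use \<open>q \<in> F\<close> q_in l_ne_q q_ne_p not_adj_l split in auto)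
  then show "min_fort_on (V - {l, p}) E (F - {l})" using split by simp
qed

text \<open>Otherwise \<open>F - {p}\<close> would be a smaller fort: \<open>p\<close> sees both \<open>l\<close> and \<open>q\<close> in it.\<close>
lemma min_fort_both_notin_q:
  assumes F: "min_fort_on V E F" and "l \<in> F" "p \<in> F"
  shows "q \<notin> F"
proof
  assume "q \<in> F"
  have fort: "fort_on V E F" using F by (rule min_fort_onD(1))
  then have FV: "F \<subseteq> V" by (rule fort_onD(2))
  have "fort_on V E (F - {p})"
  proof (rule fort_onI)
    fix w assume w: "w \<in> V" "w \<notin> F - {p}"
    show "card ((F - {p}) \<inter> nbrs E w) \<noteq> 1"
    proof (cases "w = p")
      case True
      then have "(F - {p}) \<inter> nbrs E w = {l, q}"
        using inter_nbrs_p[of "F - {p}"] FV \<open>l \<in> F\<close> \<open>q \<in> F\<close> p_ne_l q_ne_p by auto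
      then show ?thesis using l_ne_q by simp
    next
      case False
      then have "w \<notin> F" "w \<noteq> l" "w \<noteq> q" using w \<open>l \<in> F\<close> \<open>q \<in> F\<close> by auto
      then have "(F - {p}) \<inter> nbrs E w = F \<inter> nbrs E w"
        using not_adj_p w(1) by (auto simp: mem_nbrs_iff)
      then show ?thesis using fort_onD(3)[OF fort w(1) \<open>w \<notin> F\<close>] by simp
    qed
  qed (use FV \<open>l \<in> F\<close> p_ne_l in auto)
  then show False using min_fort_onD(2)[OF F, of "F - {p}"] \<open>p \<in> F\<close> by blast
qed

lemma min_fort_both:
  assumes F: "min_fort_on V E F" and "l \<in> F" "p \<in> F"
  shows "min_fort_on (V - {l, p, q}) E (F - {l, p})"
proof -
  have fort: "fort_on V E F" using F by (rule min_fort_onD(1))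
  then have FV: "F \<subseteq> V" by (rule fort_onD(2))
  have "q \<notin> F" using min_fort_both_notin_q[OF assms] .
  have split: "F \<inter> (V - {l, p, q}) = F - {l, p}" "F - (V - {l, p, q}) = {l, p}"
    using FV \<open>l \<in> F\<close> \<open>p \<in> F\<close> \<open>q \<notin> F\<close> by auto
  have "F - {l, p} \<noteq> {}"
  proof
    assume "F - {l, p} = {}"
    then have "F \<inter> nbrs E q = {p}" using q_nbrs \<open>p \<in> F\<close> by auto
    then show False using fort_on_not_single_nbr[OF fort q_in \<open>q \<notin> F\<close>] by blast
  qed
  have "min_fort_on (V - {l, p, q}) E (F \<inter> (V - {l, p, q}))"
  proof (rule min_fort_on_restrict[OF F])
    fix G assume "fort_on (V - {l, p, q}) E G"
    then show "fort_on V E G \<or> fort_on V E (G \<union> (F - (V - {l, p, q})))"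
      using fort_lift_q_not_single fort_lift_add_lp split(2)
      by (cases "card (G \<inter> nbrs E q) = 1") auto
  qed (use \<open>F - {l, p} \<noteq> {}\<close> not_adj_l not_adj_p split in auto)
  then show ?thesis using split by simp
qed

lemma min_fort_cases:
  assumes "min_fort_on V E F"
  obtains (outside) "q \<notin> F" "min_fort_on (V - {l, p}) E F"
  | (leaf) "l \<in> F" "p \<notin> F" "q \<in> F" "min_fort_on (V - {l, p}) E (F - {l})"
  | (both) "l \<in> F" "p \<in> F" "q \<notin> F" "min_fort_on (V - {l, p, q}) E (F - {l, p})"
  using min_fort_outside[OF assms] min_fort_leaf[OF assms] min_fort_both[OF assms]
    min_fort_both_notin_q[OF assms] by blast

lemma min_forts_subset:
  "{F. min_fort_on V E F} \<subseteq> {G. min_fort_on (V - {l, p}) E G \<and> q \<notin> G}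
     \<union> insert l ` {G. min_fort_on (V - {l, p}) E G \<and> q \<in> G}
     \<union> (\<lambda>G. G \<union> {l, p}) ` {G. min_fort_on (V - {l, p, q}) E G}"
proof
  fix F assume "F \<in> {F. min_fort_on V E F}"
  then have "min_fort_on V E F" by simp
  then show "F \<in> {G. min_fort_on (V - {l, p}) E G \<and> q \<notin> G}
     \<union> insert l ` {G. min_fort_on (V - {l, p}) E G \<and> q \<in> G}
     \<union> (\<lambda>G. G \<union> {l, p}) ` {G. min_fort_on (V - {l, p, q}) E G}"
  proof (cases rule: min_fort_cases)
    case outside
    then show ?thesis by simp
  next
    case leaf
    then have "F = insert l (F - {l})" "q \<in> F - {l}" using l_ne_q by auto
    then show ?thesis using leaf(4) by blast
  next
    case both
    then have "F = (F - {l, p}) \<union> {l, p}" by auto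
    then show ?thesis using both(4) by blast
  qed
qed

lemma num_min_forts_le:
  assumes "finite V"
  shows "num_min_forts_on V E
    \<le> num_min_forts_on (V - {l, p}) E + num_min_forts_on (V - {l, p, q}) E"
proof -
  define A1 where "A1 = {G. min_fort_on (V - {l, p}) E G \<and> q \<notin> G}"
  define A2 where "A2 = {G. min_fort_on (V - {l, p}) E G \<and> q \<in> G}"
  define M where "M = {G. min_fort_on (V - {l, p, q}) E G}"
  have fin: "finite A1" "finite A2" "finite M"
    using finite_min_forts_on[of "V - {l, p}" E] finite_min_forts_on[of "V - {l, p, q}" E] assms
    unfolding A1_def A2_def M_def by (auto intro: finite_subset)
  have "num_min_forts_on V E \<le> card (A1 \<union> insert l ` A2 \<union> (\<lambda>G. G \<union> {l, p}) ` M)"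
    unfolding num_min_forts_on_def A1_def A2_def M_def
    by (rule card_mono[OF _ min_forts_subset]) (use fin in \<open>simp add: A1_def A2_def M_def\<close>)
  also have "\<dots> \<le> card A1 + card A2 + card M"
    using card_Un_le[of "A1 \<union> insert l ` A2" "(\<lambda>G. G \<union> {l, p}) ` M"]
      card_Un_le[of A1 "insert l ` A2"] card_image_le[OF fin(2), of "insert l"]
      card_image_le[OF fin(3), of "\<lambda>G. G \<union> {l, p}"] by linarith
  also have "card A1 + card A2 = num_min_forts_on (V - {l, p}) E"
    using num_min_forts_on_split[of "V - {l, p}" E "\<lambda>G. q \<notin> G"] assms by (simp add: A1_def A2_def)
  finally show ?thesis by (simp add: M_def num_min_forts_on_def)
qed

lemma num_min_forts_bound:
  assumes "finite V"
    and IH: "2 * num_min_forts_on (V - {l, p}) E \<le> fort_bound (card (V - {l, p}))"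
      "2 * num_min_forts_on (V - {l, p, q}) E \<le> fort_bound (card (V - {l, p, q}))"
  shows "2 * num_min_forts_on V E \<le> fort_bound (card V)"
proof -
  have lpq: "{l, p, q} \<subseteq> V" "card {l, p} = 2" "card {l, p, q} = 3"
    using l_in p_in q_in p_ne_l q_ne_p l_ne_q by auto
  then have "3 \<le> card V" using card_mono[OF assms(1) lpq(1)] by simp
  have "2 * num_min_forts_on V E
      \<le> 2 * num_min_forts_on (V - {l, p}) E + 2 * num_min_forts_on (V - {l, p, q}) E"
    using num_min_forts_le[OF assms(1)] by linarith
  also have "\<dots> \<le> fort_bound (card V - 2) + fort_bound (card V - 3)"
    using IH lpq by (simp add: card_Diff_subset)
  also have "\<dots> \<le> fort_bound (card V)" using fort_bound_pendant_path[OF \<open>3 \<le> card V\<close>] .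
  finally show ?thesis .
qed

lemma min_fort_insert_l:
  assumes "finite V" and G: "min_fort_on (V - {l, p}) E G" and "q \<in> G"
  shows "min_fort_on V E (insert l G)"
proof (rule min_fort_onI[OF \<open>finite V\<close>])
  show "fort_on V E (insert l G)" using fort_lift_insert_l min_fort_onD(1)[OF G] \<open>q \<in> G\<close> by blast
  have GV: "G \<subseteq> V - {l, p}" using fort_onD(2)[OF min_fort_onD(1)[OF G]] .
  fix H assume H: "min_fort_on V E H" and "H \<subseteq> insert l G"
  from H show "H = insert l G"
  proof (cases rule: min_fort_cases)
    case outside
    then have "H \<subseteq> G" using \<open>H \<subseteq> insert l G\<close> fort_onD(2)[OF min_fort_onD(1)[OF outside(2)]] by blast
    then have "H = G" using min_fort_on_subset_eq[OF G min_fort_onD(1)[OF outside(2)]] by blast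
    then show ?thesis using outside(1) \<open>q \<in> G\<close> by blast
  next
    case leaf
    then have "H - {l} = G"
      using min_fort_on_subset_eq[OF G min_fort_onD(1)[OF leaf(4)]] \<open>H \<subseteq> insert l G\<close> by blast
    then show ?thesis using leaf(1) by blast
  next
    case both
    then show ?thesis using \<open>H \<subseteq> insert l G\<close> GV p_ne_l by blast
  qed
qed

lemma min_fort_add_lp:
  assumes "finite V" and G: "min_fort_on (V - {l, p, q}) E G" and q: "card (G \<inter> nbrs E q) = 1"
  shows "min_fort_on V E (G \<union> {l, p})"
proof (rule min_fort_onI[OF \<open>finite V\<close>])
  have fort: "fort_on (V - {l, p, q}) E G" using G by (rule min_fort_onD(1))
  then show "fort_on V E (G \<union> {l, p})" using fort_lift_add_lp q by blast
  have GV: "G \<subseteq> V - {l, p, q}" using fort_onD(2)[OF fort] .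
  fix H assume H: "min_fort_on V E H" and "H \<subseteq> G \<union> {l, p}"
  from H show "H = G \<union> {l, p}"
  proof (cases rule: min_fort_cases)
    case outside
    have HV: "H \<subseteq> V - {l, p}" using fort_onD(2)[OF min_fort_onD(1)[OF outside(2)]] .
    then have "H \<subseteq> G" using \<open>H \<subseteq> G \<union> {l, p}\<close> by blast
    moreover have "fort_on (V - {l, p, q}) E H"
      by (rule fort_on_restrict[OF min_fort_onD(1)[OF outside(2)]]) (use \<open>H \<subseteq> G\<close> GV in auto)
    ultimately have "H = G" using min_fort_on_subset_eq[OF G] by simp
    moreover have "q \<in> V - {l, p}" using q_in l_ne_q q_ne_p by blast
    then have "card (H \<inter> nbrs E q) \<noteq> 1"
      using fort_onD(3)[OF min_fort_onD(1)[OF outside(2)]] outside(1) by blast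
    ultimately show ?thesis using q by simp
  next
    case leaf
    have False using leaf(3) \<open>H \<subseteq> G \<union> {l, p}\<close> GV l_ne_q q_ne_p by blast
    then show ?thesis ..
  next
    case both
    have "H - {l, p} \<subseteq> G" using \<open>H \<subseteq> G \<union> {l, p}\<close> by blast
    then have "H - {l, p} = G"
      using min_fort_on_subset_eq[OF G min_fort_onD(1)[OF both(4)]] by blast
    then show ?thesis using both(1,2) by blast
  qed
qed

lemma num_min_forts_ge:
  assumes "finite V"
  shows "card {G. min_fort_on (V - {l, p}) E G \<and> q \<in> G}
       + card {G. min_fort_on (V - {l, p, q}) E G \<and> card (G \<inter> nbrs E q) = 1}
       \<le> num_min_forts_on V E"
    (is "card ?B1 + card ?B2 \<le> _")
proof -
  have fin: "finite ?B1" "finite ?B2"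
    using finite_min_forts_on[of "V - {l, p}" E] finite_min_forts_on[of "V - {l, p, q}" E] assms
    by (auto intro: finite_subset)
  have sub1: "G \<subseteq> V - {l, p}" if "G \<in> ?B1" for G
    using that fort_onD(2)[OF min_fort_onD(1)] by blast
  have sub2: "G \<subseteq> V - {l, p, q}" if "G \<in> ?B2" for G
    using that fort_onD(2)[OF min_fort_onD(1)] by blast
  have "inj_on (\<lambda>G. G \<union> {l}) ?B1" "inj_on (\<lambda>G. G \<union> {l, p}) ?B2"
    by (rule inj_on_subset[OF inj_on_Un_disjoint], use sub1 sub2 in blast)+
  moreover have "(\<lambda>G. G \<union> {l}) ` ?B1 \<inter> (\<lambda>G. G \<union> {l, p}) ` ?B2 = {}"
    using sub1 p_ne_l by blast
  ultimately have "card ?B1 + card ?B2 = card ((\<lambda>G. G \<union> {l}) ` ?B1 \<union> (\<lambda>G. G \<union> {l, p}) ` ?B2)"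
    using fin by (simp add: card_Un_disjoint card_image)
  also have "\<dots> \<le> num_min_forts_on V E"
    unfolding num_min_forts_on_def
    by (rule card_mono[OF finite_min_forts_on[OF assms]])
      (use min_fort_insert_l[OF assms] min_fort_add_lp[OF assms] in auto)
  finally show ?thesis .
qed

end

section \<open>Pendant stars\<close>

locale pendant_star =
  fixes V :: "nat set" and E :: "nat set set" and p q :: nat and L :: "nat set"
  assumes leaves_nbrs: "L \<subseteq> V \<inter> nbrs E p" and two_le_card: "2 \<le> card L"
    and nbrs_leaf: "\<And>l. l \<in> L \<Longrightarrow> V \<inter> nbrs E l = {p}" and nbrs_p: "V \<inter> nbrs E p \<subseteq> insert q L"
begin

lemma finite_leaves: "finite L"
  using two_le_card by (simp add: card_ge_0_finite)

lemma p_in: "p \<in> V"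
proof -
  obtain l where "l \<in> L" using two_le_card by fastforce
  then show ?thesis using nbrs_leaf[of l] by blast
qed

lemma p_notin_leaves: "p \<notin> L"
  using leaves_nbrs by auto

lemma inter_nbrs_leaf: "X \<subseteq> V \<Longrightarrow> l \<in> L \<Longrightarrow> X \<inter> nbrs E l = X \<inter> {p}"
  using nbrs_leaf by blast

lemma not_adj_leaf: "l \<in> L \<Longrightarrow> w \<in> V \<Longrightarrow> w \<noteq> p \<Longrightarrow> \<not> adj E l w"
proof -
  assume "l \<in> L" "w \<in> V" "w \<noteq> p"
  then have "w \<notin> nbrs E l" using nbrs_leaf by blast
  then show ?thesis by (simp add: mem_nbrs_iff adj_commute)
qed

lemma fort_on_leaves:
  assumes "S \<subseteq> L" "2 \<le> card S"
  shows "fort_on V E S"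
proof (rule fort_onI)
  fix w assume w: "w \<in> V" "w \<notin> S"
  show "card (S \<inter> nbrs E w) \<noteq> 1"
  proof (cases "w = p")
    case True
    then have "S \<inter> nbrs E w = S" using assms(1) leaves_nbrs by blast
    then show ?thesis using assms(2) by simp
  next
    case False
    then have "S \<inter> nbrs E w = {}"
      using not_adj_leaf assms(1) w(1) by (auto simp: mem_nbrs_iff)
    then show ?thesis by simp
  qed
qed (use assms leaves_nbrs in auto)

lemma p_notin_min_fort:
  assumes F: "min_fort_on V E F"
  shows "p \<notin> F"
proof
  assume "p \<in> F"
  have fort: "fort_on V E F" using F by (rule min_fort_onD(1))
  have "L \<subseteq> F" using fort_on_leaf[OF fort _ nbrs_leaf \<open>p \<in> F\<close>] leaves_nbrs by blast
  then have "L = F" using min_fort_on_subset_eq[OF F fort_on_leaves] two_le_card by blast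
  then show False using \<open>p \<in> F\<close> p_notin_leaves by blast
qed

abbreviation rest :: "nat set" where
  "rest \<equiv> V - insert p L"

lemma fort_lift_no_p:
  assumes G: "fort_on rest E G" and "G \<inter> nbrs E p = {}"
  shows "fort_on V E G"
proof -
  have GV: "G \<subseteq> V" and "p \<notin> G" using fort_onD(2)[OF G] by auto
  have "fort_on V E (G \<union> {})"
  proof (rule fort_on_extend[OF G])
    fix w assume "w \<in> V - rest - {}"
    then have "w = p \<or> w \<in> L" by blast
    then have "G \<inter> nbrs E w = {}"
      using assms(2) inter_nbrs_leaf[OF GV] \<open>p \<notin> G\<close> by auto
    then show "card ((G \<union> {}) \<inter> nbrs E w) \<noteq> 1" by simp
  qed auto
  then show ?thesis by simp
qed

lemma fort_lift_insert_leaf: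
  assumes G: "fort_on rest E G" and "G \<inter> nbrs E p \<noteq> {}" and "a \<in> L"
  shows "fort_on V E (insert a G)"
proof -
  have GV: "G \<subseteq> rest" using fort_onD(2)[OF G] .
  have "fort_on V E (G \<union> {a})"
  proof (rule fort_on_extend[OF G])
    fix w assume w: "w \<in> V - rest - {a}"
    show "card ((G \<union> {a}) \<inter> nbrs E w) \<noteq> 1"
    proof (cases "w = p")
      case True
      obtain x where x: "x \<in> G" "x \<in> nbrs E p" using assms(2) by blast
      have "finite (V \<inter> nbrs E p)" by (rule finite_subset[OF nbrs_p]) (simp add: finite_leaves)
      then have "finite ((G \<union> {a}) \<inter> nbrs E w)"
        by (rule finite_subset[rotated]) (use True GV \<open>a \<in> L\<close> leaves_nbrs in blast)
      moreover have "{a, x} \<subseteq> (G \<union> {a}) \<inter> nbrs E w" using True x \<open>a \<in> L\<close> leaves_nbrs by blast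
      ultimately have "card {a, x} \<le> card ((G \<union> {a}) \<inter> nbrs E w)" by (rule card_mono)
      moreover have "a \<noteq> x" using x(1) GV \<open>a \<in> L\<close> by blast
      ultimately show ?thesis by simp
    next
      case False
      then have "w \<in> L" using w by blast
      have "G \<union> {a} \<subseteq> V" "p \<notin> G \<union> {a}"
        using GV \<open>a \<in> L\<close> leaves_nbrs p_notin_leaves by auto
      then have "(G \<union> {a}) \<inter> nbrs E w = {}" using inter_nbrs_leaf[OF _ \<open>w \<in> L\<close>] by blast
      then show ?thesis by simp
    qed
  qed (use \<open>a \<in> L\<close> leaves_nbrs not_adj_leaf in auto)
  then show ?thesis by simp
qed

lemma min_fort_no_leaf:
  assumes F: "min_fort_on V E F" and "F \<inter> L = {}"
  shows "F \<inter> nbrs E p = {}" "min_fort_on rest E F"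
proof -
  have fort: "fort_on V E F" using F by (rule min_fort_onD(1))
  then have FV: "F \<subseteq> V" by (rule fort_onD(2))
  have "p \<notin> F" using p_notin_min_fort[OF F] .
  have "F \<inter> nbrs E p \<subseteq> {q}" using FV nbrs_p \<open>F \<inter> L = {}\<close> by blast
  moreover have "F \<inter> nbrs E p \<noteq> {q}" using fort_on_not_single_nbr[OF fort p_in \<open>p \<notin> F\<close>] .
  ultimately show "F \<inter> nbrs E p = {}" by blast
  have same: "F \<inter> rest = F" using FV \<open>p \<notin> F\<close> \<open>F \<inter> L = {}\<close> by blast
  have "min_fort_on rest E (F \<inter> rest)"
  proof (rule min_fort_on_restrict[OF F])
    fix G assume "fort_on rest E G" "G \<subset> F \<inter> rest"
    then show "fort_on V E G \<or> fort_on V E (G \<union> (F - rest))"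
      using fort_lift_no_p \<open>F \<inter> nbrs E p = {}\<close> by blast
  qed (use same fort_onD(1)[OF fort] in auto)
  then show "min_fort_on rest E F" using same by simp
qed

lemma min_fort_two_leaves:
  assumes F: "min_fort_on V E F" and "a \<in> F \<inter> L" "b \<in> F \<inter> L" "a \<noteq> b"
  shows "F = {a, b}"
  using min_fort_on_subset_eq[OF F fort_on_leaves[of "{a, b}"]] assms(2-4) by auto

lemma min_fort_one_leaf:
  assumes F: "min_fort_on V E F" and "F \<inter> L = {a}"
  shows "(F - {a}) \<inter> nbrs E p \<noteq> {}" "min_fort_on rest E (F - {a})"
proof -
  have fort: "fort_on V E F" using F by (rule min_fort_onD(1))
  then have FV: "F \<subseteq> V" by (rule fort_onD(2))
  have "p \<notin> F" using p_notin_min_fort[OF F] .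
  have "a \<in> F \<inter> nbrs E p" using assms(2) leaves_nbrs by blast
  moreover have "F \<inter> nbrs E p \<noteq> {a}" using fort_on_not_single_nbr[OF fort p_in \<open>p \<notin> F\<close>] .
  ultimately show "(F - {a}) \<inter> nbrs E p \<noteq> {}" by blast
  have split: "F \<inter> rest = F - {a}" "F - rest = {a}"
    using FV \<open>p \<notin> F\<close> assms(2) by auto
  have "min_fort_on rest E (F \<inter> rest)"
  proof (rule min_fort_on_restrict[OF F])
    fix G assume "fort_on rest E G"
    then show "fort_on V E G \<or> fort_on V E (G \<union> (F - rest))"
      using fort_lift_no_p fort_lift_insert_leaf[of G a] assms(2) split(2)
      by (cases "G \<inter> nbrs E p = {}") auto
  qed (use \<open>(F - {a}) \<inter> nbrs E p \<noteq> {}\<close> assms(2) not_adj_leaf split in auto)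
  then show "min_fort_on rest E (F - {a})" using split by simp
qed

lemma min_fort_cases:
  assumes "min_fort_on V E F"
  obtains (no_leaf) "F \<inter> nbrs E p = {}" "min_fort_on rest E F"
  | (two_leaves) a b where "a \<in> L" "b \<in> L" "a \<noteq> b" "F = {a, b}"
  | (one_leaf) a where "a \<in> L" "a \<in> F" "(F - {a}) \<inter> nbrs E p \<noteq> {}"
      "min_fort_on rest E (F - {a})"
proof (cases "\<exists>a b. a \<in> F \<inter> L \<and> b \<in> F \<inter> L \<and> a \<noteq> b")
  case True
  then show ?thesis using min_fort_two_leaves[OF assms] two_leaves by blast
next
  case False
  then consider "F \<inter> L = {}" | a where "F \<inter> L = {a}" by blast
  then show ?thesis
    using min_fort_no_leaf[OF assms] min_fort_one_leaf[OF assms] no_leaf one_leaf by cases blast+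
qed

lemma min_forts_subset:
  "{F. min_fort_on V E F} \<subseteq> {G. min_fort_on rest E G \<and> G \<inter> nbrs E p = {}}
     \<union> {S. S \<subseteq> L \<and> card S = 2}
     \<union> (\<lambda>(a, G). insert a G) ` (L \<times> {G. min_fort_on rest E G \<and> G \<inter> nbrs E p \<noteq> {}})"
proof
  fix F assume "F \<in> {F. min_fort_on V E F}"
  then have "min_fort_on V E F" by simp
  then show "F \<in> {G. min_fort_on rest E G \<and> G \<inter> nbrs E p = {}}
     \<union> {S. S \<subseteq> L \<and> card S = 2}
     \<union> (\<lambda>(a, G). insert a G) ` (L \<times> {G. min_fort_on rest E G \<and> G \<inter> nbrs E p \<noteq> {}})"
  proof (cases rule: min_fort_cases)
    case no_leaf
    then show ?thesis by simp
  next
    case (two_leaves a b)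
    then show ?thesis by simp
  next
    case (one_leaf a)
    then have "(a, F - {a}) \<in> L \<times> {G. min_fort_on rest E G \<and> G \<inter> nbrs E p \<noteq> {}}" by simp
    moreover have "F = (\<lambda>(a, G). insert a G) (a, F - {a})" using \<open>a \<in> F\<close> by auto
    ultimately show ?thesis by blast
  qed
qed

lemma num_min_forts_le:
  assumes "finite V"
  shows "2 * num_min_forts_on V E \<le> card L * (card L - 1) + 2 * card L * num_min_forts_on rest E"
proof -
  define k where "k = card L"
  define A1 where "A1 = {G. min_fort_on rest E G \<and> G \<inter> nbrs E p = {}}"
  define A2 where "A2 = {G. min_fort_on rest E G \<and> G \<inter> nbrs E p \<noteq> {}}"
  define P where "P = {S. S \<subseteq> L \<and> card S = 2}"
  have fin: "finite A1" "finite A2" "finite P"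
    using finite_min_forts_on[of rest E] assms finite_leaves
    unfolding A1_def A2_def P_def by (auto intro: finite_subset)
  have "num_min_forts_on V E \<le> card (A1 \<union> P \<union> (\<lambda>(a, G). insert a G) ` (L \<times> A2))"
    unfolding num_min_forts_on_def A1_def A2_def P_def
    by (rule card_mono[OF _ min_forts_subset])
      (use fin finite_leaves in \<open>simp add: A1_def A2_def P_def\<close>)
  also have "\<dots> \<le> card A1 + card P + card ((\<lambda>(a, G). insert a G) ` (L \<times> A2))"
    using card_Un_le[of "A1 \<union> P" "(\<lambda>(a, G). insert a G) ` (L \<times> A2)"] card_Un_le[of A1 P]
    by linarith
  also have "\<dots> \<le> card A1 + (k choose 2) + k * card A2"
    using card_image_le[of "L \<times> A2" "\<lambda>(a, G). insert a G"] finite_leaves fin(2)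
      n_subsets[OF finite_leaves, of 2]
    by (simp add: P_def k_def card_cartesian_product)
  finally have "2 * num_min_forts_on V E \<le> 2 * card A1 + k * (k - 1) + 2 * k * card A2"
    using two_mult_choose_two[of k] by linarith
  also have "\<dots> \<le> k * (k - 1) + 2 * k * (card A1 + card A2)"
  proof -
    have "2 * card A1 \<le> 2 * k * card A1" using two_le_card by (simp add: k_def)
    moreover have "2 * k * (card A1 + card A2) = 2 * k * card A1 + 2 * k * card A2"
      by (simp add: add_mult_distrib2)
    ultimately show ?thesis by linarith
  qed
  also have "card A1 + card A2 = num_min_forts_on rest E"
    using num_min_forts_on_split[of rest E "\<lambda>G. G \<inter> nbrs E p = {}"] assms
    by (simp add: A1_def A2_def)
  finally show ?thesis by (simp add: k_def)
qed

lemma num_min_forts_bound: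
  assumes "finite V" and IH: "2 * num_min_forts_on rest E \<le> fort_bound (card rest)"
  shows "2 * num_min_forts_on V E \<le> fort_bound (card V)"
proof -
  define k where "k = card L"
  have "insert p L \<subseteq> V" "card (insert p L) = k + 1"
    using p_in leaves_nbrs p_notin_leaves finite_leaves by (auto simp: k_def)
  then have "k + 1 \<le> card V" "card rest = card V - k - 1"
    using card_mono[OF assms(1) \<open>insert p L \<subseteq> V\<close>] finite_leaves by (simp_all add: card_Diff_subset)
  have "2 * num_min_forts_on V E \<le> k * (k - 1) + k * (2 * num_min_forts_on rest E)"
    using num_min_forts_le[OF assms(1)] by (simp add: k_def mult.assoc)
  also have "\<dots> \<le> k * (k - 1) + k * fort_bound (card V - k - 1)"
    using IH \<open>card rest = card V - k - 1\<close> by simp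
  also have "\<dots> \<le> fort_bound (card V)"
    using fort_bound_pendant_star[OF _ \<open>k + 1 \<le> card V\<close>] two_le_card by (simp add: k_def)
  finally show ?thesis .
qed

end

section \<open>Acyclic graphs\<close>

definition has_cycle_on :: "nat set \<Rightarrow> nat set set \<Rightarrow> bool" where
  "has_cycle_on V E \<longleftrightarrow> (\<exists>vs. length vs \<ge> 3 \<and> distinct vs \<and> set vs \<subseteq> V \<and>
      (\<forall>i. Suc i < length vs \<longrightarrow> adj E (vs ! i) (vs ! Suc i)) \<and> adj E (last vs) (hd vs))"

definition is_path_on :: "nat set \<Rightarrow> nat set set \<Rightarrow> nat list \<Rightarrow> bool" where
  "is_path_on V E vs \<longleftrightarrow> vs \<noteq> [] \<and> distinct vs \<and> set vs \<subseteq> V \<and>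
      (\<forall>i. Suc i < length vs \<longrightarrow> adj E (vs ! i) (vs ! Suc i))"

lemma has_cycle_eq_on: "has_cycle n E = has_cycle_on {0..<n} E"
  by (simp add: has_cycle_def has_cycle_on_def)

lemma has_cycle_on_mono: "has_cycle_on W E \<Longrightarrow> W \<subseteq> V \<Longrightarrow> has_cycle_on V E"
  unfolding has_cycle_on_def by (meson order_trans)

lemma longest_path_exists:
  assumes "finite V" "V \<noteq> {}"
  obtains vs where "is_path_on V E vs" "\<And>ws. is_path_on V E ws \<Longrightarrow> length ws \<le> length vs"
proof -
  let ?P = "{vs. is_path_on V E vs}"
  have "length vs \<le> card V" if "vs \<in> ?P" for vs
  proof -
    have "distinct vs" "set vs \<subseteq> V" using that by (simp_all add: is_path_on_def)
    then have "length vs = card (set vs)" by (simp add: distinct_card)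
    also have "\<dots> \<le> card V" using \<open>set vs \<subseteq> V\<close> by (rule card_mono[OF assms(1)])
    finally show ?thesis .
  qed
  then have "?P \<subseteq> {vs. set vs \<subseteq> V \<and> length vs \<le> card V}" by (auto simp: is_path_on_def)
  then have "finite ?P" using finite_lists_length_le[OF assms(1)] by (rule finite_subset)
  then have fin: "finite (length ` ?P)" by simp
  obtain v where "v \<in> V" using assms(2) by blast
  then have "[v] \<in> ?P" by (simp add: is_path_on_def)
  then have "Max (length ` ?P) \<in> length ` ?P" using fin by (intro Max_in) auto
  then obtain vs where "vs \<in> ?P" "length vs = Max (length ` ?P)" by (metis imageE)
  moreover have "length ws \<le> Max (length ` ?P)" if "ws \<in> ?P" for ws using fin that by simp
  ultimately show thesis using that by auto
qed

lemma is_path_on_snoc: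
  assumes "is_path_on V E vs" "y \<in> V" "y \<notin> set vs" "adj E (last vs) y"
  shows "is_path_on V E (vs @ [y])"
  unfolding is_path_on_def
proof (intro conjI allI impI)
  fix i assume i: "Suc i < length (vs @ [y])"
  show "adj E ((vs @ [y]) ! i) ((vs @ [y]) ! Suc i)"
  proof (cases "Suc i < length vs")
    case True
    then show ?thesis using assms(1) by (simp add: is_path_on_def nth_append)
  next
    case False
    then have "i = length vs - 1" using i by simp
    then show ?thesis using assms(1,4) False by (simp add: is_path_on_def nth_append last_conv_nth)
  qed
qed (use assms in \<open>auto simp: is_path_on_def\<close>)

lemma has_cycle_on_close_path:
  assumes "is_path_on V E vs" "j + 3 \<le> length vs" "adj E (last vs) (vs ! j)"
  shows "has_cycle_on V E"
  unfolding has_cycle_on_def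
proof (intro exI conjI allI impI)
  show "length (drop j vs) \<ge> 3" "distinct (drop j vs)" "set (drop j vs) \<subseteq> V"
    using assms(1,2) set_drop_subset[of j vs] by (auto simp: is_path_on_def)
  show "adj E (last (drop j vs)) (hd (drop j vs))"
    using assms(2,3) by (simp add: hd_drop_conv_nth)
  fix i assume "Suc i < length (drop j vs)"
  then show "adj E (drop j vs ! i) (drop j vs ! Suc i)"
    using assms(1) by (simp add: is_path_on_def)
qed

text \<open>A longest path cannot be prolonged at its end, so the end vertex sees a second path vertex
  besides its predecessor, which closes a cycle.\<close>
lemma has_cycle_on_if_min_degree_two:
  assumes "finite V" "V \<noteq> {}" and deg: "\<And>v. v \<in> V \<Longrightarrow> 2 \<le> card (V \<inter> nbrs E v)"
  shows "has_cycle_on V E"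
proof -
  obtain vs where vs: "is_path_on V E vs"
    and longest: "\<And>ws. is_path_on V E ws \<Longrightarrow> length ws \<le> length vs"
    using longest_path_exists[OF assms(1,2), where E = E] by metis
  define x where "x = last vs"
  define pred where "pred = (if 2 \<le> length vs then vs ! (length vs - 2) else x)"
  have "vs \<noteq> []" "set vs \<subseteq> V" using vs by (simp_all add: is_path_on_def)
  then have "x \<in> V" unfolding x_def using last_in_set by blast
  have "\<not> V \<inter> nbrs E x \<subseteq> {pred}"
  proof
    assume "V \<inter> nbrs E x \<subseteq> {pred}"
    then have "card (V \<inter> nbrs E x) \<le> card {pred}" by (rule card_mono[rotated]) simp
    then show False using deg[OF \<open>x \<in> V\<close>] by simp
  qed
  then obtain y where "y \<in> V" "y \<in> nbrs E x" "y \<noteq> pred" by blast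
  then have y: "y \<in> V" "adj E x y" "y \<noteq> pred" by (simp_all add: mem_nbrs_iff adj_commute)
  then have "y \<noteq> x" by (auto simp: adj_def)
  have "y \<in> set vs"
  proof (rule ccontr)
    assume "y \<notin> set vs"
    then have "is_path_on V E (vs @ [y])"
      using is_path_on_snoc[OF vs y(1)] y(2) by (simp add: x_def)
    then show False using longest[of "vs @ [y]"] by simp
  qed
  then obtain j where j: "j < length vs" "vs ! j = y" by (auto simp: in_set_conv_nth)
  have "j \<noteq> length vs - 1" using j \<open>y \<noteq> x\<close> \<open>vs \<noteq> []\<close> by (auto simp: x_def last_conv_nth)
  moreover have "j \<noteq> length vs - 2 \<or> length vs < 2"
    using j y(3) by (cases "2 \<le> length vs") (auto simp: pred_def)
  ultimately have "j + 3 \<le> length vs" using j(1) by linarith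
  then show ?thesis using has_cycle_on_close_path[OF vs] y(2) j(2) by (simp add: x_def)
qed

lemma pendant_configuration:
  assumes "finite V" "W \<subseteq> V" and deg: "2 \<le> card (V \<inter> nbrs E p)" and few: "card (W \<inter> nbrs E p) \<le> 1"
    and leaf: "\<And>l. l \<in> V \<inter> nbrs E p - W \<Longrightarrow> V \<inter> nbrs E l = {p}"
  obtains l q where "pendant_path V E l p q" | q L where "pendant_star V E p q L"
proof -
  define L where "L = V \<inter> nbrs E p - W"
  have fin: "finite (W \<inter> nbrs E p)" "finite L"
    using assms(1,2) by (auto simp: L_def intro: finite_subset)
  obtain q where q: "W \<inter> nbrs E p \<subseteq> {q}"
    using few card_le_Suc0_iff_eq[OF fin(1)] by (metis One_nat_def insert_iff subsetI)
  have split: "V \<inter> nbrs E p = L \<union> (W \<inter> nbrs E p)" using assms(2) by (auto simp: L_def)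
  then have "card (V \<inter> nbrs E p) \<le> card L + card (W \<inter> nbrs E p)" by (simp add: card_Un_le)
  then consider "2 \<le> card L" | "card L = 1" "card (W \<inter> nbrs E p) = 1" using deg few by linarith
  then show thesis
  proof cases
    case 1
    have "pendant_star V E p q L"
    proof
      show "L \<subseteq> V \<inter> nbrs E p" "2 \<le> card L" using 1 by (auto simp: L_def)
      show "V \<inter> nbrs E l = {p}" if "l \<in> L" for l using leaf that by (simp add: L_def)
      show "V \<inter> nbrs E p \<subseteq> insert q L" using split q by blast
    qed
    then show thesis using that(2) by blast
  next
    case 2
    obtain l where l: "L = {l}" using 2(1) by (rule card_1_singletonE)
    have "W \<inter> nbrs E p \<noteq> {}" using 2(2) by auto
    then have Wq: "W \<inter> nbrs E p = {q}" using q by blast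
    have "l \<in> V \<inter> nbrs E p - W" using l by (simp add: L_def)
    have "pendant_path V E l p q"
    proof
      show "l \<in> V" "V \<inter> nbrs E l = {p}" using \<open>l \<in> V \<inter> nbrs E p - W\<close> leaf by auto
      show "V \<inter> nbrs E p = {l, q}" using split l Wq by (simp add: insert_commute)
      show "l \<noteq> q" using \<open>l \<in> V \<inter> nbrs E p - W\<close> Wq by blast
    qed
    then show thesis using that(1) by blast
  qed
qed

lemma nbrs_of_single_nbr:
  assumes "v \<in> V" "V \<inter> nbrs E u = {w}" and "u \<in> V \<inter> nbrs E v"
  shows "w = v"
proof -
  have "v \<in> nbrs E u" using assms(3) by (simp add: nbrs_commute[where v = v])
  then have "v \<in> V \<inter> nbrs E u" using assms(1) by blast
  then show ?thesis using assms(2) by simp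
qed

lemma isolated_edge_if_max_degree_one:
  assumes "v \<in> V" and leaf: "\<And>v. v \<in> V \<Longrightarrow> \<exists>u. V \<inter> nbrs E v = {u}"
  obtains u where "u \<in> V" "V \<inter> nbrs E v = {u}" "V \<inter> nbrs E u = {v}"
proof -
  obtain u where u: "V \<inter> nbrs E v = {u}" using leaf assms(1) by blast
  then have "u \<in> V" by blast
  then obtain w where w: "V \<inter> nbrs E u = {w}" using leaf by blast
  moreover have "u \<in> V \<inter> nbrs E v" using u by blast
  ultimately have "w = v" by (rule nbrs_of_single_nbr[OF assms(1)])
  then show thesis using that \<open>u \<in> V\<close> u w by blast
qed

text \<open>Let \<open>W\<close> be the set of vertices of degree at least two.  Unless all degrees are at most one,
  the forest induced on \<open>W\<close> has a vertex \<open>p\<close> with at most one neighbour in \<open>W\<close>; its other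
  neighbours are leaves.\<close>
lemma acyclic_reducible_configuration:
  assumes fin: "finite V" and "V \<noteq> {}" and acyclic: "\<not> has_cycle_on V E"
  obtains (isolated_vertex) v where "v \<in> V" "V \<inter> nbrs E v = {}"
  | (isolated_edge) u v where "u \<in> V" "v \<in> V" "V \<inter> nbrs E u = {v}" "V \<inter> nbrs E v = {u}"
  | (pendant_path) l p q where "pendant_path V E l p q"
  | (pendant_star) p q L where "pendant_star V E p q L"
proof (cases "\<exists>v\<in>V. V \<inter> nbrs E v = {}")
  case True
  then show thesis using isolated_vertex by blast
next
  case False
  define W where "W = {v \<in> V. 2 \<le> card (V \<inter> nbrs E v)}"
  have "W \<subseteq> V" by (auto simp: W_def)
  have leaf: "\<exists>u. V \<inter> nbrs E v = {u}" if "v \<in> V" "v \<notin> W" for v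
  proof -
    have "V \<inter> nbrs E v \<noteq> {}" using False that(1) by blast
    then have "card (V \<inter> nbrs E v) \<noteq> 0" using fin by simp
    moreover have "card (V \<inter> nbrs E v) < 2" using that by (simp add: W_def)
    ultimately have "card (V \<inter> nbrs E v) = 1" by linarith
    then show ?thesis by (meson card_1_singletonE)
  qed
  show thesis
  proof (cases "W = {}")
    case True
    obtain v where "v \<in> V" using \<open>V \<noteq> {}\<close> by blast
    moreover have "\<And>v. v \<in> V \<Longrightarrow> \<exists>u. V \<inter> nbrs E v = {u}" using leaf True by blast
    ultimately obtain u where "u \<in> V" "V \<inter> nbrs E v = {u}" "V \<inter> nbrs E u = {v}"
      by (rule isolated_edge_if_max_degree_one)
    then show thesis using isolated_edge[of v u] \<open>v \<in> V\<close> by blast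
  next
    case False
    have "finite W" using fin \<open>W \<subseteq> V\<close> by (rule finite_subset[rotated])
    moreover have "\<not> has_cycle_on W E" using acyclic has_cycle_on_mono \<open>W \<subseteq> V\<close> by blast
    ultimately obtain p where "p \<in> W" and few: "\<not> 2 \<le> card (W \<inter> nbrs E p)"
      using has_cycle_on_if_min_degree_two[of W E] False by blast
    have deg: "2 \<le> card (V \<inter> nbrs E p)" using \<open>p \<in> W\<close> by (simp add: W_def)
    have leaf_p: "V \<inter> nbrs E l = {p}" if l: "l \<in> V \<inter> nbrs E p - W" for l
    proof -
      obtain u where u: "V \<inter> nbrs E l = {u}" using leaf l by blast
      have "p \<in> V" using \<open>p \<in> W\<close> \<open>W \<subseteq> V\<close> by blast
      then have "u = p" using nbrs_of_single_nbr u l by blast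
      with u show ?thesis by simp
    qed
    show thesis
      by (rule pendant_configuration[OF fin \<open>W \<subseteq> V\<close> deg _ leaf_p])
        (use few pendant_path pendant_star in auto)
  qed
qed

lemma num_min_forts_on_acyclic_le:
  assumes "finite V" "\<not> has_cycle_on V E"
  shows "2 * num_min_forts_on V E \<le> fort_bound (card V)"
  using assms
proof (induction V rule: finite_psubset_induct)
  case (psubset V)
  have IH: "2 * num_min_forts_on (V - S) E \<le> fort_bound (card (V - S))"
    if "S \<subseteq> V" "S \<noteq> {}" for S
  proof -
    have "V - S \<subset> V" "\<not> has_cycle_on (V - S) E"
      using that psubset.prems has_cycle_on_mono by blast+
    then show ?thesis by (rule psubset.IH)
  qed
  show ?case
  proof (cases "V = {}")
    case True
    then show ?thesis by (simp add: num_min_forts_on_def min_fort_on_def fort_on_def fort_bound_def)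
  next
    case False
    from psubset.hyps False psubset.prems show ?thesis
    proof (cases rule: acyclic_reducible_configuration)
      case (isolated_vertex v)
      then show ?thesis
        using num_min_forts_on_bound_isolated_vertex[OF psubset.hyps] IH[of "{v}"] by simp
    next
      case (isolated_edge u v)
      then show ?thesis
        using num_min_forts_on_bound_isolated_edge[OF psubset.hyps] IH[of "{u, v}"] by simp
    next
      case (pendant_path l p q)
      then show ?thesis
        using pendant_path.num_min_forts_bound[OF _ psubset.hyps] IH[of "{l, p}"] IH[of "{l, p, q}"]
          pendant_path.l_in pendant_path.p_in pendant_path.q_in by simp
    next
      case (pendant_star p q L)
      then show ?thesis
        using pendant_star.num_min_forts_bound[OF _ psubset.hyps] IH[of "insert p L"]
          pendant_star.p_in pendant_star.leaves_nbrs by blast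
    qed
  qed
qed

section \<open>Paths and stars\<close>

lemma adj_path_edges: "adj (path_edges N) u v \<longleftrightarrow> (Suc u = v \<and> v < N) \<or> (Suc v = u \<and> u < N)"
  unfolding adj_def path_edges_def by (auto simp: doubleton_eq_iff)

text \<open>The largest element of a fort is the last vertex: otherwise its right neighbour sees
  exactly one vertex of the fort.\<close>
lemma fort_on_path_last:
  assumes "m \<le> N" and F: "fort_on {0..<m} (path_edges N) F"
  shows "m - 1 \<in> F"
proof (rule ccontr)
  assume "m - 1 \<notin> F"
  have "F \<noteq> {}" "F \<subseteq> {0..<m}" using fort_onD[OF F] by auto
  then have fin: "finite F" by (simp add: finite_subset)
  define x where "x = Max F"
  have "x \<in> F" "\<And>y. y \<in> F \<Longrightarrow> y \<le> x"
    using fin \<open>F \<noteq> {}\<close> by (simp_all add: x_def)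
  moreover from \<open>x \<in> F\<close> have "x < m" "x \<noteq> m - 1" using \<open>F \<subseteq> {0..<m}\<close> \<open>m - 1 \<notin> F\<close> by auto
  ultimately have "Suc x < m" by linarith
  have "Suc x \<notin> F" "Suc (Suc x) \<notin> F"
    using \<open>\<And>y. y \<in> F \<Longrightarrow> y \<le> x\<close>[of "Suc x"] \<open>\<And>y. y \<in> F \<Longrightarrow> y \<le> x\<close>[of "Suc (Suc x)"] by auto
  moreover have "F \<inter> nbrs (path_edges N) (Suc x) = {x}"
  proof -
    have "F \<inter> nbrs (path_edges N) (Suc x) \<subseteq> {x, Suc (Suc x)}"
      using \<open>F \<subseteq> {0..<m}\<close> by (auto simp: mem_nbrs_iff adj_path_edges)
    moreover have "x \<in> nbrs (path_edges N) (Suc x)"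
      using \<open>Suc x < m\<close> assms(1) by (simp add: mem_nbrs_iff adj_path_edges)
    ultimately show ?thesis using \<open>x \<in> F\<close> \<open>Suc (Suc x) \<notin> F\<close> by blast
  qed
  moreover have "Suc x \<in> {0..<m}" using \<open>Suc x < m\<close> by simp
  ultimately show False using fort_on_not_single_nbr[OF F] by blast
qed

lemma pendant_path_path_edges:
  assumes "4 \<le> m" "m \<le> N"
  shows "pendant_path {0..<m} (path_edges N) (m - 1) (m - 2) (m - 3)"
proof
  show "m - 1 \<in> {0..<m}" "m - 1 \<noteq> m - 3" using assms(1) by auto
  show "{0..<m} \<inter> nbrs (path_edges N) (m - 1) = {m - 2}"
    using assms by (auto simp: mem_nbrs_iff adj_path_edges)
  show "{0..<m} \<inter> nbrs (path_edges N) (m - 2) = {m - 1, m - 3}"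
    using assms by (auto simp: mem_nbrs_iff adj_path_edges)
qed

text \<open>Minimal forts of the shorter paths contain their last vertex, so all of them extend.\<close>
lemma num_min_forts_path_ge:
  assumes "4 \<le> m" "m \<le> N"
  shows "num_min_forts_on {0..<m - 2} (path_edges N) + num_min_forts_on {0..<m - 3} (path_edges N)
    \<le> num_min_forts_on {0..<m} (path_edges N)"
proof -
  let ?E = "path_edges N"
  interpret pendant_path "{0..<m}" ?E "m - 1" "m - 2" "m - 3"
    using pendant_path_path_edges[OF assms] .
  obtain j where j: "m = j + 4" using assms(1) le_Suc_ex by (metis add.commute)
  have V1: "{0..<m} - {m - 1, m - 2} = {0..<m - 2}"
    and V2: "{0..<m} - {m - 1, m - 2, m - 3} = {0..<m - 3}" using j by auto
  have "{G. min_fort_on {0..<m - 2} ?E G \<and> m - 3 \<in> G} = {G. min_fort_on {0..<m - 2} ?E G}"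
    using fort_on_path_last[of "m - 2" N] assms(2) j by (auto dest: min_fort_onD(1))
  moreover have "G \<inter> nbrs ?E (m - 3) = {m - 4}" if "fort_on {0..<m - 3} ?E G" for G
  proof -
    have "j \<in> G" using fort_on_path_last[OF _ that] assms(2) j by simp
    moreover have "G \<subseteq> {0..<Suc j}" using fort_onD(2)[OF that] j by simp
    ultimately show ?thesis using assms(2) j by (auto simp: mem_nbrs_iff adj_path_edges)
  qed
  then have "{G. min_fort_on {0..<m - 3} ?E G \<and> card (G \<inter> nbrs ?E (m - 3)) = 1}
      = {G. min_fort_on {0..<m - 3} ?E G}"
    by (auto dest: min_fort_onD(1))
  ultimately show ?thesis
    using num_min_forts_ge assms unfolding V1 V2 num_min_forts_on_def by simp
qed

lemma padovan_le_num_min_forts_path: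
  "m \<le> N \<Longrightarrow> padovan m \<le> num_min_forts_on {0..<m} (path_edges N)"
proof (induction m rule: less_induct)
  case (less m)
  consider "m = 0" | "1 \<le> m" "m \<le> 3" | "4 \<le> m" by linarith
  then show ?case
  proof cases
    case 1
    then show ?thesis by simp
  next
    case 2
    then have "padovan m = 1" by (auto simp: numeral_eq_Suc le_Suc_eq)
    then show ?thesis using num_min_forts_on_pos[of "{0..<m}"] 2 by simp
  next
    case 3
    have "padovan m \<le> num_min_forts_on {0..<m - 2} (path_edges N)
        + num_min_forts_on {0..<m - 3} (path_edges N)"
      using padovan_rec[of m] less.IH[of "m - 2"] less.IH[of "m - 3"] less.prems 3
      by (simp add: add_mono)
    then show ?thesis using num_min_forts_path_ge[OF 3 less.prems] by linarith
  qed
qed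

definition star_edges :: "nat \<Rightarrow> nat set set" where
  "star_edges n = {{0, i} | i. 0 < i \<and> i < n}"

lemma adj_star_edges: "adj (star_edges n) u v \<longleftrightarrow> (u = 0 \<and> 0 < v \<and> v < n) \<or> (v = 0 \<and> 0 < u \<and> u < n)"
  unfolding adj_def star_edges_def by (auto simp: doubleton_eq_iff)

text \<open>Every edge of a star contains the centre \<open>0\<close>; on a cycle \<open>v\<^sub>0 v\<^sub>1 v\<^sub>2 \<dots>\<close> this forces
  \<open>v\<^sub>1 = 0\<close>, and then the edge leaving \<open>v\<^sub>2\<close> misses the centre.\<close>
lemma star_edges_no_cycle: "\<not> has_cycle n (star_edges n)"
proof
  let ?E = "star_edges n"
  assume "has_cycle n ?E"
  then obtain vs where l3: "length vs \<ge> 3" and d: "distinct vs"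
    and a: "\<And>i. Suc i < length vs \<Longrightarrow> adj ?E (vs ! i) (vs ! Suc i)" and al: "adj ?E (last vs) (hd vs)"
    unfolding has_cycle_def by blast
  have "vs \<noteq> []" using l3 by auto
  have a01: "adj ?E (vs ! 0) (vs ! 1)" and a12: "adj ?E (vs ! 1) (vs ! 2)"
    using a[of 0] a[of 1] l3 by (simp_all add: numeral_2_eq_2)
  have d012: "vs ! 0 \<noteq> vs ! 1" "vs ! 1 \<noteq> vs ! 2" "vs ! 0 \<noteq> vs ! 2"
    using d l3 \<open>vs \<noteq> []\<close> nth_eq_iff_index_eq[of vs 0 1] nth_eq_iff_index_eq[of vs 1 2]
      nth_eq_iff_index_eq[of vs 0 2]
    by simp_all
  obtain j where j: "j < length vs" "j \<noteq> 1" "j \<noteq> 2" "adj ?E (vs ! 2) (vs ! j)"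
  proof (cases "length vs = 3")
    case True
    then have "last vs = vs ! 2" "hd vs = vs ! 0"
      using \<open>vs \<noteq> []\<close> by (simp_all add: last_conv_nth hd_conv_nth)
    then show ?thesis using that[of 0] al \<open>vs \<noteq> []\<close> by simp
  next
    case False
    then show ?thesis using that[of 3] a[of 2] l3 by simp
  qed
  have "vs ! j \<noteq> vs ! 1" "vs ! j \<noteq> vs ! 2"
    using d j l3 nth_eq_iff_index_eq[of vs j 1] nth_eq_iff_index_eq[of vs j 2] by simp_all
  then show False using a01 a12 j(4) d012 unfolding adj_star_edges by auto
qed

lemma is_tree_star_edges: "is_tree n (star_edges n)"
  unfolding is_tree_def is_forest_def
proof (intro conjI)
  show "simple_graph n (star_edges n)"
    unfolding simple_graph_def
  proof
    fix e assume "e \<in> star_edges n"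
    then obtain i where "e = {0, i}" "0 < i" "i < n" unfolding star_edges_def by blast
    then show "\<exists>u v. u \<noteq> v \<and> u < n \<and> v < n \<and> e = {u, v}" by (intro exI[of _ 0] exI[of _ i]) simp
  qed
  show "\<not> has_cycle n (star_edges n)" by (rule star_edges_no_cycle)
  show "connected_graph n (star_edges n)"
    unfolding connected_graph_def
  proof (intro allI impI)
    let ?R = "{(a, b). adj (star_edges n) a b}"
    fix u v assume "u < n" "v < n"
    have "(u, 0) \<in> ?R\<^sup>*" using \<open>u < n\<close>
      by (cases "u = 0") (simp_all add: adj_star_edges r_into_rtrancl)
    moreover have "(0, v) \<in> ?R\<^sup>*" using \<open>v < n\<close>
      by (cases "v = 0") (simp_all add: adj_star_edges r_into_rtrancl)
    ultimately show "(u, v) \<in> ?R\<^sup>*" by (rule rtrancl_trans)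
  qed
qed

lemma num_min_forts_forest_le:
  assumes "3 \<le> n" "is_forest n E"
  shows "num_min_forts n E \<le> (n choose 2) * F_P n"
proof -
  have "\<not> has_cycle_on {0..<n} E" using assms(2) by (simp add: is_forest_def has_cycle_eq_on)
  then have "2 * num_min_forts n E \<le> fort_bound n"
    using num_min_forts_on_acyclic_le[of "{0..<n}" E] by (simp add: num_min_forts_eq_on)
  also have "\<dots> = n * (n - 1) * padovan n" using assms(1) by (simp add: fort_bound_def)
  also have "\<dots> \<le> n * (n - 1) * F_P n"
    using padovan_le_num_min_forts_path[of n n] by (simp add: F_P_def num_min_forts_eq_on)
  also have "\<dots> = 2 * ((n choose 2) * F_P n)" by (simp add: two_mult_choose_two)
  finally show ?thesis by simp
qed

lemma finite_num_min_forts_forests: "finite {num_min_forts n E | E. is_forest n E}"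
proof -
  have "E \<subseteq> Pow {0..<n}" if "is_forest n E" for E
    using that unfolding is_forest_def simple_graph_def by auto
  then have "{num_min_forts n E | E. is_forest n E} \<subseteq> (\<lambda>E. num_min_forts n E) ` Pow (Pow {0..<n})"
    by blast
  then show ?thesis by (rule finite_subset) simp
qed

theorem theorem1:
  fixes n :: nat
  assumes "n \<ge> 3"
  shows "F_T n \<le> F_R n \<and> F_R n \<le> (n choose 2) * F_P n"
proof
  let ?trees = "{num_min_forts n E | E. is_tree n E}"
  let ?forests = "{num_min_forts n E | E. is_forest n E}"
  have "?trees \<subseteq> ?forests" "?trees \<noteq> {}"
    using is_tree_star_edges[of n] by (auto simp: is_tree_def)
  then show "F_T n \<le> F_R n"
    unfolding F_T_def F_R_def using finite_num_min_forts_forests by (rule Max_mono)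
  have "F_R n \<in> ?forests"
    unfolding F_R_def using finite_num_min_forts_forests \<open>?trees \<subseteq> ?forests\<close> \<open>?trees \<noteq> {}\<close>
    by (intro Max_in) auto
  then show "F_R n \<le> (n choose 2) * F_P n" using num_min_forts_forest_le[OF assms] by auto
qed

end
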